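(* Let $T$ be a tree and let $S$ be a covering strategy for $T$ with $k$ robots (at prescribed starting vertices) of minimum length among all such covering strategies. If an edge $(x,y)$ of $T$ is traversed by at least two different robots in $S$, then all robots that traverse $(x,y)$ traverse it in the same direction (either all from $x$ to $y$, or all from $y$ to $x$).
   Context: A walk in $T$ is a sequence $W=(u_1,\dots,u_m)$ of vertices in which consecutive terms are equal or adjacent; it traverses edge $(x,y)$ from $x$ to $y$ when $u_i=x,u_{i+1}=y$ for some $i$. Its length is the number of indices $i$ with $u_i\neq u_{i+1}$. A strategy with $k$ robots is a $k$-tuple of walks, walk $i$ starting at robot $i$'s prescribed starting vertex; it is covering if every vertex of $T$ is in some walk; its length is the sum of the lengths of its walks. *)

theory Defs
  imports Main
begin

definition graph :: "'a set \<Rightarrow> ('a \<Rightarrow> 'a \<Rightarrow> bool) \<Rightarrow> bool" where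
  "graph V E \<longleftrightarrow> finite V \<and> (\<forall>x y. E x y \<longrightarrow> x \<in> V \<and> y \<in> V) \<and>
     (\<forall>x y. E x y \<longrightarrow> E y x) \<and> (\<forall>x. \<not> E x x)"

definition is_path :: "('a \<Rightarrow> 'a \<Rightarrow> bool) \<Rightarrow> 'a list \<Rightarrow> bool" where
  "is_path E p \<longleftrightarrow> p \<noteq> [] \<and> (\<forall>i. Suc i < length p \<longrightarrow> E (p ! i) (p ! Suc i))"

definition connected_graph :: "'a set \<Rightarrow> ('a \<Rightarrow> 'a \<Rightarrow> bool) \<Rightarrow> bool" where
  "connected_graph V E \<longleftrightarrow> V \<noteq> {} \<and>
     (\<forall>x\<in>V. \<forall>y\<in>V. \<exists>p. is_path E p \<and> hd p = x \<and> last p = y)"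

definition is_cycle :: "('a \<Rightarrow> 'a \<Rightarrow> bool) \<Rightarrow> 'a list \<Rightarrow> bool" where
  "is_cycle E c \<longleftrightarrow> length c \<ge> 3 \<and> distinct c \<and> is_path E c \<and> E (last c) (hd c)"

definition tree :: "'a set \<Rightarrow> ('a \<Rightarrow> 'a \<Rightarrow> bool) \<Rightarrow> bool" where
  "tree V E \<longleftrightarrow> graph V E \<and> connected_graph V E \<and> (\<nexists>c. is_cycle E c)"

definition is_walk :: "'a set \<Rightarrow> ('a \<Rightarrow> 'a \<Rightarrow> bool) \<Rightarrow> 'a list \<Rightarrow> bool" where
  "is_walk V E w \<longleftrightarrow> w \<noteq> [] \<and> set w \<subseteq> V \<and>
     (\<forall>i. Suc i < length w \<longrightarrow> w ! i = w ! Suc i \<or> E (w ! i) (w ! Suc i))"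

definition traverses :: "'a list \<Rightarrow> 'a \<Rightarrow> 'a \<Rightarrow> bool" where
  "traverses w x y \<longleftrightarrow> (\<exists>i. Suc i < length w \<and> w ! i = x \<and> w ! Suc i = y)"

definition walk_length :: "'a list \<Rightarrow> nat" where
  "walk_length w = card {i. Suc i < length w \<and> w ! i \<noteq> w ! Suc i}"

definition is_strategy :: "'a set \<Rightarrow> ('a \<Rightarrow> 'a \<Rightarrow> bool) \<Rightarrow> nat \<Rightarrow> (nat \<Rightarrow> 'a) \<Rightarrow> (nat \<Rightarrow> 'a list) \<Rightarrow> bool" where
  "is_strategy V E k s W \<longleftrightarrow> (\<forall>i<k. is_walk V E (W i) \<and> hd (W i) = s i)"

definition covering :: "'a set \<Rightarrow> nat \<Rightarrow> (nat \<Rightarrow> 'a list) \<Rightarrow> bool" where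
  "covering V k W \<longleftrightarrow> V \<subseteq> (\<Union>i<k. set (W i))"

definition strategy_length :: "nat \<Rightarrow> (nat \<Rightarrow> 'a list) \<Rightarrow> nat" where
  "strategy_length k W = (\<Sum>i<k. walk_length (W i))"

end

theory Submission
  imports Defs
begin

text \<open>
  Suppose robots \<open>i \<noteq> j\<close> traverse the edge in opposite directions, so that
  \<open>W i = A @ x # y # B\<close> and \<open>W j = C @ y # x # D\<close>. Exchanging the tails yields the walks
  \<open>A @ x # D\<close> and \<open>C @ y # B\<close>: they start where the old ones did, visit the same vertices
  altogether, and avoid the two moves across the edge, so the strategy becomes shorter by 2,
  contradicting minimality. If a single robot traverses the edge both ways, any other robot
  traversing it conflicts with one of these two traversals.
\<close>

lemma walk_length_Nil [simp]: "walk_length [] = 0"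
  by (simp add: walk_length_def)

lemma walk_length_singleton [simp]: "walk_length [a] = 0"
  by (simp add: walk_length_def)

lemma walk_length_Cons_Cons [simp]:
  "walk_length (a # b # t) = (if a \<noteq> b then 1 else 0) + walk_length (b # t)"
proof -
  let ?S = "{i. Suc i < length (b # t) \<and> (b # t) ! i \<noteq> (b # t) ! Suc i}"
  have split: "{i. Suc i < length (a # b # t) \<and> (a # b # t) ! i \<noteq> (a # b # t) ! Suc i}
      = (if a \<noteq> b then {0} else {}) \<union> Suc ` ?S" (is "?L = ?R")
  proof (rule set_eqI)
    show "i \<in> ?L \<longleftrightarrow> i \<in> ?R" for i
      by (cases i) auto
  qed
  have "finite ?S"
    by (rule finite_subset[of _ "{..<length (b # t)}"]) auto
  then have "card ((if a \<noteq> b then {0} else {}) \<union> Suc ` ?S) = (if a \<noteq> b then 1 else 0) + card ?S"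
    by (auto simp: card_image)
  then show ?thesis
    unfolding walk_length_def split by simp
qed

lemma walk_length_append_Cons:
  "walk_length (xs @ z # ys) = walk_length (xs @ [z]) + walk_length (z # ys)"
  by (induction xs rule: induct_list012) (auto simp: neq_Nil_conv)

lemma is_walk_append_Cons_iff:
  "is_walk V E (xs @ z # ys) \<longleftrightarrow> is_walk V E (xs @ [z]) \<and> is_walk V E (z # ys)"
proof -
  have walk_iff: "is_walk V E w \<longleftrightarrow> w \<noteq> [] \<and> set w \<subseteq> V \<and> successively (\<lambda>a b. a = b \<or> E a b) w"
    for w
    unfolding is_walk_def successively_conv_nth by auto
  show ?thesis
    unfolding walk_iff by (auto simp: successively_append_iff)
qed

lemma traverses_split:
  assumes "traverses w x y"
  obtains A B where "w = A @ x # y # B"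
proof -
  obtain n where n: "Suc n < length w" "w ! n = x" "w ! Suc n = y"
    using assms unfolding traverses_def by blast
  then have "drop n w = x # y # drop (Suc (Suc n)) w"
    by (metis Cons_nth_drop_Suc Suc_lessD)
  then have "w = take n w @ x # y # drop (Suc (Suc n)) w"
    by (metis append_take_drop_id)
  then show thesis by (rule that)
qed

lemma is_walk_splice:
  assumes "is_walk V E (A @ x # B)" "is_walk V E (C @ x # D)"
  shows "is_walk V E (A @ x # D)"
  using assms is_walk_append_Cons_iff[of V E A x B] is_walk_append_Cons_iff[of V E C x D]
    is_walk_append_Cons_iff[of V E A x D]
  by blast

lemma walk_length_exchange_tails:
  assumes "x \<noteq> y"
  shows "walk_length (A @ x # y # B) + walk_length (C @ y # x # D)
    = walk_length (A @ x # D) + walk_length (C @ y # B) + 2"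
  using assms walk_length_append_Cons[of A x "y # B"] walk_length_append_Cons[of A x D]
    walk_length_append_Cons[of C y "x # D"] walk_length_append_Cons[of C y B]
  by simp

lemma is_strategy_fun_upd:
  assumes "is_strategy V E k s W" "is_walk V E w" "hd w = s i"
  shows "is_strategy V E k s (W(i := w))"
  using assms unfolding is_strategy_def by simp

lemma covering_fun_upd2:
  assumes "covering V k W" "i < k" "j < k" "i \<noteq> j"
    and "set (W i) \<union> set (W j) \<subseteq> set v \<union> set w"
  shows "covering V k (W(i := v, j := w))"
proof -
  let ?W' = "W(i := v, j := w)"
  have "set (?W' i) \<subseteq> (\<Union>l<k. set (?W' l))" "set (?W' j) \<subseteq> (\<Union>l<k. set (?W' l))"
    using \<open>i < k\<close> \<open>j < k\<close> by (intro UN_upper; simp)+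
  then have vw_covered: "set v \<union> set w \<subseteq> (\<Union>l<k. set (?W' l))"
    using \<open>i \<noteq> j\<close> by simp
  have "set (W l) \<subseteq> (\<Union>l<k. set (?W' l))" if "l < k" for l
  proof (cases "l = i \<or> l = j")
    case True
    then show ?thesis using assms(5) vw_covered by blast
  next
    case False
    then have "set (W l) = set (?W' l)" by simp
    then show ?thesis using \<open>l < k\<close> by (metis UN_upper lessThan_iff)
  qed
  then have "(\<Union>l<k. set (W l)) \<subseteq> (\<Union>l<k. set (?W' l))"
    by (intro UN_least) simp
  then show ?thesis
    using assms(1) unfolding covering_def by (rule subset_trans[rotated])
qed

lemma strategy_length_fun_upd:
  assumes "i < k"
  shows "strategy_length k (W(i := w)) + walk_length (W i) = strategy_length k W + walk_length w"
proof -
  have "strategy_length k (W(i := w)) = walk_length w + (\<Sum>l\<in>{..<k} - {i}. walk_length (W l))"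
    unfolding strategy_length_def using assms by (simp add: sum.remove)
  moreover have "strategy_length k W = walk_length (W i) + (\<Sum>l\<in>{..<k} - {i}. walk_length (W l))"
    unfolding strategy_length_def using assms by (simp add: sum.remove)
  ultimately show ?thesis by simp
qed

lemma opposite_traversals_shorten_strategy:
  assumes strat: "is_strategy V E k s W" and cov: "covering V k W"
    and "i < k" "j < k" "i \<noteq> j" "x \<noteq> y"
    and "traverses (W i) x y" "traverses (W j) y x"
  shows "\<exists>W'. is_strategy V E k s W' \<and> covering V k W' \<and> strategy_length k W' + 2 = strategy_length k W"
proof -
  obtain A B where AB: "W i = A @ x # y # B"
    using \<open>traverses (W i) x y\<close> by (rule traverses_split)
  obtain C D where CD: "W j = C @ y # x # D"
    using \<open>traverses (W j) y x\<close> by (rule traverses_split)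
  define W' where "W' = W(i := A @ x # D, j := C @ y # B)"
  have "is_walk V E (W i)" "hd (W i) = s i" "is_walk V E (W j)" "hd (W j) = s j"
    using strat \<open>i < k\<close> \<open>j < k\<close> unfolding is_strategy_def by auto
  then have "is_walk V E (A @ x # D)" "hd (A @ x # D) = s i"
    and "is_walk V E (C @ y # B)" "hd (C @ y # B) = s j"
    unfolding AB CD
    using is_walk_splice[of V E A x "y # B" "C @ [y]" D] is_walk_splice[of V E C y "x # D" "A @ [x]" B]
    by (auto simp: hd_append)
  then have "is_strategy V E k s W'"
    unfolding W'_def using strat by (intro is_strategy_fun_upd)
  moreover have "covering V k W'"
    unfolding W'_def using cov \<open>i < k\<close> \<open>j < k\<close> \<open>i \<noteq> j\<close> by (rule covering_fun_upd2) (auto simp: AB CD)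
  moreover have "strategy_length k W' + walk_length (W i) + walk_length (W j)
      = strategy_length k W + walk_length (A @ x # D) + walk_length (C @ y # B)"
    using strategy_length_fun_upd[OF \<open>i < k\<close>, of W "A @ x # D"]
      strategy_length_fun_upd[OF \<open>j < k\<close>, of "W(i := A @ x # D)" "C @ y # B"] \<open>i \<noteq> j\<close>
    unfolding W'_def by (simp only: fun_upd_other)
  then have "strategy_length k W' + 2 = strategy_length k W"
    using walk_length_exchange_tails[OF \<open>x \<noteq> y\<close>, of A B C D] unfolding AB CD by linarith
  ultimately show ?thesis by blast
qed

lemma minimal_strategy_no_opposite_traversals:
  assumes "is_strategy V E k s W" "covering V k W"
    and minimal: "\<forall>W'. is_strategy V E k s W' \<and> covering V k W' \<longrightarrow>
               strategy_length k W \<le> strategy_length k W'"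
    and "i < k" "j < k" "i \<noteq> j" "x \<noteq> y"
    and "traverses (W i) x y" "traverses (W j) y x"
  shows False
proof -
  obtain W' where "is_strategy V E k s W'" "covering V k W'"
    and shorter: "strategy_length k W' + 2 = strategy_length k W"
    using opposite_traversals_shorten_strategy[OF assms(1,2,4-9)] by blast
  then have "strategy_length k W \<le> strategy_length k W'"
    using minimal by blast
  with shorter show False by simp
qed

theorem lemma3:
  fixes V :: "'a set" and E :: "'a \<Rightarrow> 'a \<Rightarrow> bool" and k :: nat
    and s :: "nat \<Rightarrow> 'a" and W :: "nat \<Rightarrow> 'a list" and x y :: 'a
  assumes "tree V E"
    and "\<forall>i<k. s i \<in> V"
    and "is_strategy V E k s W" and "covering V k W"
    and "\<forall>W'. is_strategy V E k s W' \<and> covering V k W' \<longrightarrow>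
               strategy_length k W \<le> strategy_length k W'"
    and "E x y"
    and "\<exists>i<k. \<exists>j<k. i \<noteq> j \<and> (traverses (W i) x y \<or> traverses (W i) y x)
                            \<and> (traverses (W j) x y \<or> traverses (W j) y x)"
  shows "(\<forall>i<k. \<not> traverses (W i) y x) \<or> (\<forall>i<k. \<not> traverses (W i) x y)"
proof (rule ccontr)
  assume "\<not> ?thesis"
  then obtain a b where a: "a < k" "traverses (W a) y x" and b: "b < k" "traverses (W b) x y"
    by blast
  have "x \<noteq> y"
    using \<open>tree V E\<close> \<open>E x y\<close> unfolding tree_def graph_def by metis
  note opposite = minimal_strategy_no_opposite_traversals[OF assms(3-5) _ _ _ \<open>x \<noteq> y\<close>]
  obtain c where c: "c < k" "c \<noteq> a" "traverses (W c) x y \<or> traverses (W c) y x"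
    using assms(7) by metis
  show False
  proof (cases "a = b")
    case False
    then show False using opposite[OF b(1) a(1) _ b(2) a(2)] by blast
  next
    case True
    from c(3) show False
    proof
      assume "traverses (W c) x y"
      then show False using opposite[OF c(1) a(1) c(2) _ a(2)] by blast
    next
      assume "traverses (W c) y x"
      then show False using opposite[OF b(1) c(1) _ b(2)] c(2) True by blast
    qed
  qed
qed

end
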